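(* Let $\mathcal{M}$ be a bounded graph matroid family. If there is a small $\mathcal{M}$-circuit with minimum degree one, then there exists an integer $m\ge2$ such that the star $K_{1,m}$ is the unique (up to isomorphism) small $\mathcal{M}$-circuit with at most $m$ edges and with minimum degree one.
   Context: All graphs are finite and simple and have no isolated vertices. A graph matroid family $\mathcal{M}$ assigns to every graph $G$ a matroid $\mathcal{M}(G)$ on $E(G)$ such that (i) every graph isomorphism $V(G)\to V(H)$ induces an isomorphism $\mathcal{M}(G)\to\mathcal{M}(H)$, and (ii) for every subgraph $H$ of $G$, $\mathcal{M}(H)$ is the restriction of $\mathcal{M}(G)$ to $E(H)$. Let $r(G)$ be the rank of $\mathcal{M}(G)$. $\mathcal{M}$ is bounded if $r(K_n)$ is bounded in $n$; its limit is the rank $r(\mathcal{M})$. An $\mathcal{M}$-circuit is a graph $G$ with $r(G)<|E(G)|$ and $r(G-e)=|E(G)|-1$ for all $e\in E(G)$; it is small if it has at most $r(\mathcal{M})$ edges. *)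

theory Defs
  imports Main
begin

text \<open>Graphs: finite simple graphs without isolated vertices, on vertex set nat,
  represented by their edge sets (each edge a 2-element set of vertices).
  Every finite graph is isomorphic to one of this form.\<close>

type_synonym graph = "nat set set"

definition is_graph :: "graph \<Rightarrow> bool" where
  "is_graph G \<longleftrightarrow> finite G \<and> (\<forall>e\<in>G. \<exists>u v. u \<noteq> v \<and> e = {u, v})"

definition verts :: "graph \<Rightarrow> nat set" where
  "verts G = \<Union>G"

definition graph_iso :: "(nat \<Rightarrow> nat) \<Rightarrow> graph \<Rightarrow> graph \<Rightarrow> bool" where
  "graph_iso f G H \<longleftrightarrow> bij_betw f (verts G) (verts H) \<and>
     (\<forall>u\<in>verts G. \<forall>v\<in>verts G. {u, v} \<in> G \<longleftrightarrow> {f u, f v} \<in> H)"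

definition isomorphic :: "graph \<Rightarrow> graph \<Rightarrow> bool" where
  "isomorphic G H \<longleftrightarrow> (\<exists>f. graph_iso f G H)"

definition matroid :: "'a set \<Rightarrow> ('a set \<Rightarrow> bool) \<Rightarrow> bool" where
  "matroid E indep \<longleftrightarrow> finite E \<and>
     (\<forall>X. indep X \<longrightarrow> X \<subseteq> E) \<and>
     indep {} \<and>
     (\<forall>X Y. indep Y \<and> X \<subseteq> Y \<longrightarrow> indep X) \<and>
     (\<forall>X Y. indep X \<and> indep Y \<and> card X < card Y \<longrightarrow> (\<exists>y\<in>Y - X. indep (insert y X)))"

definition graph_matroid_family :: "(graph \<Rightarrow> nat set set \<Rightarrow> bool) \<Rightarrow> bool" where
  "graph_matroid_family M \<longleftrightarrow>
     (\<forall>G. is_graph G \<longrightarrow> matroid G (M G)) \<and>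
     (\<forall>G H f. is_graph G \<and> is_graph H \<and> graph_iso f G H \<longrightarrow>
        (\<forall>X. X \<subseteq> G \<longrightarrow> (M G X \<longleftrightarrow> M H ((\<lambda>e. f ` e) ` X)))) \<and>
     (\<forall>G H. is_graph G \<and> H \<subseteq> G \<longrightarrow> (\<forall>X. M H X \<longleftrightarrow> (M G X \<and> X \<subseteq> H)))"

definition rank :: "(graph \<Rightarrow> nat set set \<Rightarrow> bool) \<Rightarrow> graph \<Rightarrow> nat" where
  "rank M G = Max {card X | X. M G X}"

definition complete_graph :: "nat \<Rightarrow> graph" where
  "complete_graph n = {{i, j} | i j. i < n \<and> j < n \<and> i \<noteq> j}"

definition bounded_family :: "(graph \<Rightarrow> nat set set \<Rightarrow> bool) \<Rightarrow> bool" where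
  "bounded_family M \<longleftrightarrow> (\<exists>B. \<forall>n. rank M (complete_graph n) \<le> B)"

text \<open>The limit r(M) of a bounded family: the limit (= supremum, the sequence being
  nondecreasing) of r(K_n).\<close>

definition family_limit :: "(graph \<Rightarrow> nat set set \<Rightarrow> bool) \<Rightarrow> nat" where
  "family_limit M = (SUP n. rank M (complete_graph n))"

definition circuit :: "(graph \<Rightarrow> nat set set \<Rightarrow> bool) \<Rightarrow> graph \<Rightarrow> bool" where
  "circuit M G \<longleftrightarrow> is_graph G \<and> rank M G < card G \<and>
     (\<forall>e\<in>G. rank M (G - {e}) = card G - 1)"

definition small_circuit :: "(graph \<Rightarrow> nat set set \<Rightarrow> bool) \<Rightarrow> graph \<Rightarrow> bool" where
  "small_circuit M G \<longleftrightarrow> circuit M G \<and> card G \<le> family_limit M"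

definition degree :: "graph \<Rightarrow> nat \<Rightarrow> nat" where
  "degree G v = card {e \<in> G. v \<in> e}"

definition min_degree_one :: "graph \<Rightarrow> bool" where
  "min_degree_one G \<longleftrightarrow> G \<noteq> {} \<and> Min (degree G ` verts G) = 1"

definition star :: "nat \<Rightarrow> graph" where
  "star m = {{0, i} | i. 1 \<le> i \<and> i \<le> m}"

end

theory Submission
  imports Defs
begin

text \<open>Independence of an edge set is the same in every graph containing it and is invariant
  under relabelling of vertices. Let m be the least k for which the star K_{1,k} is dependent.
  If G is a circuit with a pendant edge uv, moving the leaf v to a fresh vertex w gives a copy of
  G; hence G - uv spans every edge uw with w fresh, a star at u with |G| fresh leaves is
  dependent, and m \<le> |G|. The star K_{1,m} is then a circuit, and m \<ge> 2 since otherwise no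
  edge is independent and r(M) = 0. If a small circuit G with |G| = m had an edge f avoiding u,
  the same spanning argument would make f together with a star at u with m - 1 fresh leaves
  dependent; copies of this configuration show that a star with m - 1 leaves spans every K_n,
  so r(M) \<le> m - 1 < |G|, which is impossible. Hence every edge of G passes through u and G is
  a copy of K_{1,m}.\<close>

section \<open>Graphs\<close>

definition star_at :: "nat \<Rightarrow> nat set \<Rightarrow> graph" where
  "star_at c L = (\<lambda>l. {c, l}) ` L"

definition pendant_edge :: "graph \<Rightarrow> nat \<Rightarrow> nat \<Rightarrow> bool" where
  "pendant_edge G u v \<longleftrightarrow> {u, v} \<in> G \<and> u \<noteq> v \<and> (\<forall>d\<in>G. v \<in> d \<longrightarrow> d = {u, v})"

abbreviation relabel :: "(nat \<Rightarrow> nat) \<Rightarrow> graph \<Rightarrow> graph" where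
  "relabel h G \<equiv> (\<lambda>e. h ` e) ` G"

lemma is_graph_subset: "is_graph G \<Longrightarrow> H \<subseteq> G \<Longrightarrow> is_graph H"
  unfolding is_graph_def using finite_subset by blast

lemma is_graph_insert: "is_graph G \<Longrightarrow> a \<noteq> b \<Longrightarrow> is_graph (insert {a, b} G)"
  unfolding is_graph_def by blast

lemma is_graph_Un: "is_graph G \<Longrightarrow> is_graph H \<Longrightarrow> is_graph (G \<union> H)"
  unfolding is_graph_def by blast

lemma is_graph_edge_through:
  assumes "is_graph G" "d \<in> G" "u \<in> d"
  obtains l where "l \<noteq> u" "d = {u, l}"
proof -
  obtain a b where "a \<noteq> b" "d = {a, b}" using assms(1,2) unfolding is_graph_def by meson
  with assms(3) that show thesis by (metis insert_commute insertE singletonD)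
qed

lemma finite_verts: "is_graph G \<Longrightarrow> finite (verts G)"
  unfolding is_graph_def verts_def by (metis finite.emptyI finite.insertI finite_Union)

lemma exists_fresh_vertices: "finite (S :: nat set) \<Longrightarrow> \<exists>W. finite W \<and> card W = k \<and> W \<inter> S = {}"
  by (metis Compl_eq_Diff_UNIV Diff_infinite_finite disjoint_eq_subset_Compl infinite_UNIV_nat
      infinite_arbitrarily_large)

lemma is_graph_star_at: "finite L \<Longrightarrow> c \<notin> L \<Longrightarrow> is_graph (star_at c L)"
  unfolding is_graph_def star_at_def by (metis (no_types, lifting) finite_imageI imageE)

lemma card_star_at: "c \<notin> L \<Longrightarrow> card (star_at c L) = card L"
  unfolding star_at_def by (rule card_image) (auto simp: inj_on_def doubleton_eq_iff)

lemma Union_star_at: "\<Union>(star_at c L) \<subseteq> insert c L"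
  unfolding star_at_def by auto

lemma star_eq_star_at: "star m = star_at 0 {1..m}"
  unfolding star_def star_at_def by auto

lemma card_star: "card (star m) = m"
  unfolding star_eq_star_at by (simp add: card_star_at)

lemma star_at_eq_if_edges_through:
  assumes "is_graph G" "\<forall>d\<in>G. u \<in> d"
  shows "G = star_at u (verts G - {u})"
proof
  show "G \<subseteq> star_at u (verts G - {u})"
  proof
    fix d assume "d \<in> G"
    moreover obtain l where "l \<noteq> u" "d = {u, l}"
      using is_graph_edge_through[OF assms(1) \<open>d \<in> G\<close>] assms(2) \<open>d \<in> G\<close> by blast
    ultimately show "d \<in> star_at u (verts G - {u})" unfolding star_at_def verts_def by blast
  qed
next
  show "star_at u (verts G - {u}) \<subseteq> G"
  proof
    fix d assume "d \<in> star_at u (verts G - {u})"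
    then obtain l d' where "d = {u, l}" "l \<noteq> u" "d' \<in> G" "l \<in> d'"
      unfolding star_at_def verts_def by blast
    moreover obtain l' where "d' = {u, l'}"
      using is_graph_edge_through[OF assms(1) \<open>d' \<in> G\<close>] assms(2) \<open>d' \<in> G\<close> by blast
    ultimately show "d \<in> G" by auto
  qed
qed

lemma is_graph_relabel:
  assumes "is_graph X" "inj_on h (\<Union>X)"
  shows "is_graph (relabel h X)"
proof -
  have "\<exists>a b. a \<noteq> b \<and> h ` e = {a, b}" if "e \<in> X" for e
  proof -
    obtain u v where "u \<noteq> v" "e = {u, v}" using \<open>e \<in> X\<close> assms(1) unfolding is_graph_def by blast
    moreover have "u \<in> \<Union>X" "v \<in> \<Union>X" using \<open>e \<in> X\<close> calculation(2) by auto
    ultimately have "h u \<noteq> h v" "h ` e = {h u, h v}" using assms(2) inj_onD by fastforce+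
    then show ?thesis by blast
  qed
  then show ?thesis using assms(1) unfolding is_graph_def by blast
qed

lemma graph_iso_relabel:
  assumes "inj_on h (\<Union>X)"
  shows "graph_iso h X (relabel h X)"
  unfolding graph_iso_def verts_def
proof (intro conjI ballI)
  show "bij_betw h (\<Union>X) (\<Union>(relabel h X))"
    using assms unfolding bij_betw_def by (simp add: image_Union)
  fix u v assume uv: "u \<in> \<Union>X" "v \<in> \<Union>X"
  show "{u, v} \<in> X \<longleftrightarrow> {h u, h v} \<in> relabel h X"
  proof
    assume "{u, v} \<in> X"
    then show "{h u, h v} \<in> relabel h X"
      using image_eqI[of "{h u, h v}" "\<lambda>e. h ` e" "{u, v}" X] by simp
  next
    assume "{h u, h v} \<in> relabel h X"
    then obtain e where e: "e \<in> X" "h ` {u, v} = h ` e" by auto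
    have "{u, v} \<subseteq> \<Union>X" "e \<subseteq> \<Union>X" using uv e(1) by auto
    from inj_on_image_eq_iff[OF assms this] have "{u, v} = e" using e(2) by simp
    then show "{u, v} \<in> X" using e(1) by simp
  qed
qed

lemma relabel_star_at:
  assumes "finite L" "c \<notin> L"
  obtains h where "inj_on h (insert c L)" "relabel h (star_at c L) = star (card L)"
proof -
  obtain g where g: "bij_betw g L {0..<card L}" using ex_bij_betw_finite_nat[OF assms(1)] by blast
  define h where "h z = (if z = c then 0 else Suc (g z))" for z
  have "inj_on h (insert c L)"
    using g assms(2) unfolding h_def bij_betw_def inj_on_def by auto
  moreover have "relabel h (star_at c L) = star_at 0 (Suc ` g ` L)"
    unfolding star_at_def h_def using assms(2) by (auto simp: image_image)
  moreover have "Suc ` g ` L = {1..card L}"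
    using g unfolding bij_betw_def by (simp add: atLeastLessThanSuc_atLeastAtMost)
  ultimately show thesis using that by (auto simp: star_eq_star_at)
qed

lemma isomorphic_star_at:
  assumes "finite L" "c \<notin> L"
  shows "isomorphic (star_at c L) (star (card L))"
proof -
  obtain h where h: "inj_on h (insert c L)" "relabel h (star_at c L) = star (card L)"
    using relabel_star_at[OF assms] .
  have "inj_on h (\<Union>(star_at c L))" using inj_on_subset[OF h(1) Union_star_at] .
  then show ?thesis using graph_iso_relabel h(2) unfolding isomorphic_def by metis
qed

lemma min_degree_one_pendant_edge:
  assumes "is_graph G" "min_degree_one G"
  obtains u v where "pendant_edge G u v"
proof -
  obtain e0 where "e0 \<in> G" using assms(2) unfolding min_degree_one_def by blast
  moreover obtain a0 b0 where "e0 = {a0, b0}"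
    using assms(1) \<open>e0 \<in> G\<close> unfolding is_graph_def by meson
  ultimately have "a0 \<in> verts G" unfolding verts_def by blast
  then have "Min (degree G ` verts G) \<in> degree G ` verts G"
    using finite_verts[OF assms(1)] by (intro Min_in) auto
  then have "1 \<in> degree G ` verts G" using assms(2) unfolding min_degree_one_def by simp
  then obtain v where "degree G v = 1" by (metis imageE)
  then have "card {d\<in>G. v \<in> d} = 1" unfolding degree_def .
  then obtain e where e: "{d\<in>G. v \<in> d} = {e}" by (rule card_1_singletonE)
  then have "e \<in> G" "v \<in> e" by auto
  then obtain u where "u \<noteq> v" "e = {v, u}" by (rule is_graph_edge_through[OF assms(1)])
  then have "pendant_edge G u v" using e unfolding pendant_edge_def by auto
  then show thesis by (rule that)
qed

lemma is_graph_complete_graph: "is_graph (complete_graph n)"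
proof -
  have "complete_graph n \<subseteq> Pow {0..<n}" unfolding complete_graph_def by auto
  then have "finite (complete_graph n)" by (rule finite_subset) auto
  then show ?thesis unfolding is_graph_def complete_graph_def by auto
qed

section \<open>Independence in a graph matroid family\<close>

locale matroid_family =
  fixes M :: "graph \<Rightarrow> nat set set \<Rightarrow> bool"
  assumes family: "graph_matroid_family M"
begin

definition indep :: "graph \<Rightarrow> bool" where
  "indep X \<longleftrightarrow> is_graph X \<and> M X X"

lemma matroid_M: "is_graph G \<Longrightarrow> matroid G (M G)"
  using family unfolding graph_matroid_family_def by simp

lemma M_iso_iff:
  "is_graph G \<Longrightarrow> is_graph H \<Longrightarrow> graph_iso f G H \<Longrightarrow> X \<subseteq> G \<Longrightarrow>
    M G X \<longleftrightarrow> M H (relabel f X)"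
  using family unfolding graph_matroid_family_def by simp

lemma M_restrict_iff: "is_graph G \<Longrightarrow> H \<subseteq> G \<Longrightarrow> M H X \<longleftrightarrow> M G X \<and> X \<subseteq> H"
  using family unfolding graph_matroid_family_def by simp

lemma M_iff_indep:
  assumes "is_graph G"
  shows "M G X \<longleftrightarrow> X \<subseteq> G \<and> indep X"
proof
  assume "M G X"
  moreover from this have "X \<subseteq> G" using matroid_M[OF assms] unfolding matroid_def by simp
  ultimately show "X \<subseteq> G \<and> indep X"
    using M_restrict_iff[OF assms, of X X] is_graph_subset[OF assms] unfolding indep_def by simp
qed (use M_restrict_iff[OF assms, of X X] in \<open>simp add: indep_def\<close>)

lemma indep_empty: "indep {}"
proof -
  have "is_graph {}" unfolding is_graph_def by simp
  moreover from this have "M {} {}" using matroid_M unfolding matroid_def by blast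
  ultimately show ?thesis unfolding indep_def by simp
qed

lemma indep_subset:
  assumes "indep Y" "X \<subseteq> Y"
  shows "indep X"
proof -
  have "is_graph Y" "M Y Y" using assms(1) unfolding indep_def by simp_all
  moreover from this have "M Y X" using matroid_M assms(2) unfolding matroid_def by blast
  ultimately show ?thesis using M_iff_indep by simp
qed

lemma indep_augment:
  assumes "indep X" "indep Y" "card X < card Y"
  obtains y where "y \<in> Y - X" "indep (insert y X)"
proof -
  have G: "is_graph (X \<union> Y)" using assms(1,2) is_graph_Un unfolding indep_def by blast
  then have "M (X \<union> Y) X" "M (X \<union> Y) Y" using M_iff_indep assms(1,2) by auto
  then obtain y where "y \<in> Y - X" "M (X \<union> Y) (insert y X)"
    using matroid_M[OF G] assms(3) unfolding matroid_def by meson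
  then show thesis using that M_iff_indep[OF G] by blast
qed

lemma indep_relabel_iff:
  assumes "is_graph X" "inj_on h (\<Union>X)"
  shows "indep (relabel h X) \<longleftrightarrow> indep X"
proof -
  have "is_graph (relabel h X)" using is_graph_relabel[OF assms] .
  moreover have "M X X \<longleftrightarrow> M (relabel h X) (relabel h X)"
    using M_iso_iff[OF assms(1) calculation graph_iso_relabel[OF assms(2)]] by simp
  ultimately show ?thesis using assms(1) unfolding indep_def by blast
qed

lemma indep_star_at_iff:
  assumes "finite L" "c \<notin> L"
  shows "indep (star_at c L) \<longleftrightarrow> indep (star (card L))"
proof -
  obtain h where h: "inj_on h (insert c L)" "relabel h (star_at c L) = star (card L)"
    using relabel_star_at[OF assms] .
  have "inj_on h (\<Union>(star_at c L))" using inj_on_subset[OF h(1) Union_star_at] .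
  then show ?thesis using indep_relabel_iff[OF is_graph_star_at[OF assms]] h(2) by metis
qed

lemma card_indep_le_spanning:
  assumes "indep B" "\<And>t. t \<in> T \<Longrightarrow> t \<notin> B \<Longrightarrow> \<not> indep (insert t B)"
    and "J \<subseteq> B \<union> T" "indep J"
  shows "card J \<le> card B"
proof (rule ccontr)
  assume "\<not> card J \<le> card B"
  then obtain y where "y \<in> J - B" "indep (insert y B)" using indep_augment[OF assms(1,4)] by auto
  then show False using assms(2,3) by blast
qed

lemma finite_ranks: "is_graph G \<Longrightarrow> finite {card X | X. M G X}"
proof -
  assume G: "is_graph G"
  then have "{card X | X. M G X} \<subseteq> card ` Pow G" using M_iff_indep by auto
  moreover have "finite G" using G unfolding is_graph_def by simp
  ultimately show ?thesis using finite_subset by blast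
qed

lemma card_le_rank: "is_graph G \<Longrightarrow> X \<subseteq> G \<Longrightarrow> indep X \<Longrightarrow> card X \<le> rank M G"
  unfolding rank_def using finite_ranks M_iff_indep by (metis (mono_tags, lifting) Max_ge mem_Collect_eq)

lemma rank_le:
  assumes "is_graph G" "\<And>X. X \<subseteq> G \<Longrightarrow> indep X \<Longrightarrow> card X \<le> k"
  shows "rank M G \<le> k"
proof -
  have "M G {}" using M_iff_indep[OF assms(1)] indep_empty by simp
  then have "{card X | X. M G X} \<noteq> {}" by blast
  then show ?thesis unfolding rank_def using finite_ranks[OF assms(1)] assms M_iff_indep[OF assms(1)]
    by (subst Max_le_iff) auto
qed

lemma rank_attained:
  assumes "is_graph G"
  obtains X where "X \<subseteq> G" "indep X" "card X = rank M G"
proof -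
  have "M G {}" using M_iff_indep[OF assms(1)] indep_empty by simp
  then have "{card X | X. M G X} \<noteq> {}" by blast
  then have "rank M G \<in> {card X | X. M G X}"
    unfolding rank_def using finite_ranks[OF assms] Max_in by blast
  then show thesis using that M_iff_indep[OF assms] by auto
qed

lemma family_limit_le: "(\<And>n. rank M (complete_graph n) \<le> k) \<Longrightarrow> family_limit M \<le> k"
  unfolding family_limit_def by (intro cSUP_least) auto

lemma circuit_not_indep: "circuit M G \<Longrightarrow> \<not> indep G"
  unfolding circuit_def using card_le_rank by fastforce

lemma circuit_minus_indep:
  assumes "circuit M G" "e \<in> G"
  shows "indep (G - {e})"
proof -
  have G: "is_graph G" "finite G" using assms(1) unfolding circuit_def is_graph_def by auto
  then have "is_graph (G - {e})" using is_graph_subset by blast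
  then obtain X where X: "X \<subseteq> G - {e}" "indep X" "card X = rank M (G - {e})"
    by (rule rank_attained)
  then have "card X = card (G - {e})" using assms G(2) unfolding circuit_def by simp
  then have "X = G - {e}" using X(1) G(2) by (simp add: card_subset_eq)
  then show ?thesis using X(2) by simp
qed

lemma circuitI:
  assumes "is_graph G" "\<not> indep G" "\<And>e. e \<in> G \<Longrightarrow> indep (G - {e})"
  shows "circuit M G"
proof -
  have fin: "finite G" using assms(1) unfolding is_graph_def by simp
  have "G \<noteq> {}" using assms(2) indep_empty by auto
  then have pos: "card G > 0" using fin by (simp add: card_gt_0_iff)
  have "rank M G \<le> card G - 1"
  proof (rule rank_le[OF assms(1)])
    fix X assume X: "X \<subseteq> G" "indep X"
    then have "X \<noteq> G" using assms(2) by auto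
    then have "card X < card G" using X(1) fin by (meson psubsetI psubset_card_mono)
    then show "card X \<le> card G - 1" by simp
  qed
  moreover have "rank M (G - {e}) = card G - 1" if "e \<in> G" for e
  proof (rule antisym)
    have G': "is_graph (G - {e})" using is_graph_subset[OF assms(1)] by simp
    show "rank M (G - {e}) \<le> card G - 1"
    proof (rule rank_le[OF G'])
      fix X assume "X \<subseteq> G - {e}"
      then have "card X \<le> card (G - {e})" using fin by (simp add: card_mono)
      then show "card X \<le> card G - 1" using fin that by simp
    qed
    show "card G - 1 \<le> rank M (G - {e})"
      using card_le_rank[OF G' _ assms(3)[OF that]] fin that by simp
  qed
  ultimately show ?thesis unfolding circuit_def using assms(1) pos by simp
qed

section \<open>Circuits with a pendant edge\<close>

lemma pendant_relabel_not_indep: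
  assumes "circuit M G" "pendant_edge G u v" "w \<notin> verts G"
  shows "\<not> indep (insert {u, w} (G - {{u, v}}))"
proof -
  have G: "is_graph G" using assms(1) unfolding circuit_def by simp
  define h where "h z = (if z = v then w else z)" for z
  have "inj_on h (\<Union>G)"
    using assms(3) unfolding h_def verts_def inj_on_def by auto
  moreover have "relabel h G = insert {u, w} (G - {{u, v}})"
  proof -
    have "G = insert {u, v} (G - {{u, v}})" using assms(2) unfolding pendant_edge_def by blast
    then have "relabel h G = insert (h ` {u, v}) (relabel h (G - {{u, v}}))" by (metis image_insert)
    moreover have "h ` {u, v} = {u, w}" using assms(2) unfolding h_def pendant_edge_def by auto
    moreover have "relabel h (G - {{u, v}}) = (\<lambda>d. d) ` (G - {{u, v}})"
    proof (rule image_cong)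
      fix d assume "d \<in> G - {{u, v}}"
      then have "v \<notin> d" using assms(2) unfolding pendant_edge_def by blast
      then show "h ` d = d" unfolding h_def by force
    qed simp
    ultimately show ?thesis by simp
  qed
  ultimately show ?thesis using indep_relabel_iff[OF G] circuit_not_indep[OF assms(1)] by metis
qed

lemma card_indep_less_pendant_circuit:
  assumes "circuit M G" "pendant_edge G u v" "W \<inter> verts G = {}"
    and "J \<subseteq> (G - {{u, v}}) \<union> star_at u W" "indep J"
  shows "card J < card G"
proof -
  have uv: "{u, v} \<in> G" and "finite G"
    using assms(1,2) unfolding circuit_def is_graph_def pendant_edge_def by simp_all
  have "card J \<le> card (G - {{u, v}})"
  proof (rule card_indep_le_spanning[OF circuit_minus_indep[OF assms(1) uv] _ assms(4,5)])
    fix t assume "t \<in> star_at u W"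
    then obtain w where "t = {u, w}" "w \<in> W" unfolding star_at_def by blast
    then show "\<not> indep (insert t (G - {{u, v}}))"
      using pendant_relabel_not_indep[OF assms(1,2)] assms(3) by blast
  qed
  moreover have "card G > 0" using uv \<open>finite G\<close> card_gt_0_iff by blast
  ultimately show ?thesis using uv \<open>finite G\<close> by simp
qed

lemma not_indep_star_card_circuit:
  assumes "circuit M G" "min_degree_one G"
  shows "\<not> indep (star (card G))"
proof -
  have G: "is_graph G" using assms(1) unfolding circuit_def by simp
  obtain u v where uv: "pendant_edge G u v" using min_degree_one_pendant_edge[OF G assms(2)] .
  obtain W where W: "finite W" "card W = card G" "W \<inter> verts G = {}"
    using exists_fresh_vertices[OF finite_verts[OF G]] by blast
  have u: "u \<notin> W" using uv W(3) unfolding pendant_edge_def verts_def by blast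
  have "\<not> indep (star_at u W)"
  proof
    assume "indep (star_at u W)"
    with card_indep_less_pendant_circuit[OF assms(1) uv W(3)] have "card (star_at u W) < card G"
      by blast
    then show False using card_star_at[OF u] W(2) by simp
  qed
  then show ?thesis using indep_star_at_iff[OF W(1) u] W(2) by simp
qed

lemma indep_star_plus_edge_iff:
  assumes "finite W" "finite W'" "card W' = card W"
    and "c \<notin> W'" "a \<noteq> b" "{a, b} \<inter> insert c W' = {}"
    and "u \<notin> W" "x \<noteq> y" "{x, y} \<inter> insert u W = {}"
  shows "indep (insert {a, b} (star_at c W')) \<longleftrightarrow> indep (insert {x, y} (star_at u W))"
proof -
  obtain g where g: "bij_betw g W' W" using finite_same_card_bij[OF assms(2,1,3)] by blast
  define h where "h z = (if z = a then x else if z = b then y else if z = c then u else g z)" for z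
  have abc: "h a = x" "h b = y" "h c = u" using assms(5,6) unfolding h_def by auto
  have "h z = g z" if "z \<in> W'" for z
    using that assms(4,6) unfolding h_def by auto
  then have W': "inj_on h W'" "h ` W' = W"
    using g inj_on_cong[of W' h g] image_cong[of W' W' h g] unfolding bij_betw_def by auto
  then have "inj_on h (insert c W')" "h ` insert c W' = insert u W"
    using abc(3) assms(4,7) by (simp_all add: inj_on_insert Diff_insert0)
  then have bcW: "inj_on h (insert b (insert c W'))" "h ` insert b (insert c W') = insert y (insert u W)"
    using abc(2) assms(6,9) by (simp_all add: inj_on_insert Diff_insert0)
  have "insert b (insert c W') - {a} = insert b (insert c W')" using assms(5,6) by blast
  then have "inj_on h (insert a (insert b (insert c W')))"
    unfolding inj_on_insert[of h a] using bcW abc(1) assms(8,9) by simp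
  moreover have "\<Union>(insert {a, b} (star_at c W')) \<subseteq> insert a (insert b (insert c W'))"
    using Union_star_at[of c W'] by auto
  ultimately have inj: "inj_on h (\<Union>(insert {a, b} (star_at c W')))" by (rule inj_on_subset)
  have "relabel h (star_at c W') = (\<lambda>l. {u, h l}) ` W'"
    unfolding star_at_def image_image using abc(3) by simp
  also have "\<dots> = star_at u W" unfolding star_at_def W'(2)[symmetric] image_image ..
  finally have "relabel h (insert {a, b} (star_at c W')) = insert {x, y} (star_at u W)"
    using abc(1,2) by simp
  moreover have "is_graph (insert {a, b} (star_at c W'))"
    using is_graph_insert[OF is_graph_star_at[OF assms(2,4)] assms(5)] .
  ultimately show ?thesis using indep_relabel_iff[OF _ inj] by metis
qed

lemma family_limit_le_if_star_plus_edge_dependent: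
  assumes "finite W" "u \<notin> W" "x \<noteq> y" "{x, y} \<inter> insert u W = {}"
    and "\<not> indep (insert {x, y} (star_at u W))" "indep (star (card W))"
  shows "family_limit M \<le> card W"
proof (rule family_limit_le)
  fix n
  define W' where "W' = {Suc n..<Suc n + card W}"
  have W': "finite W'" "card W' = card W" "n \<notin> W'" unfolding W'_def by simp_all
  have S: "indep (star_at n W')" using indep_star_at_iff[OF W'(1,3)] W'(2) assms(6) by simp
  show "rank M (complete_graph n) \<le> card W"
  proof (rule rank_le[OF is_graph_complete_graph])
    fix X assume X: "X \<subseteq> complete_graph n" "indep X"
    have "card X \<le> card (star_at n W')"
    proof (rule card_indep_le_spanning[OF S _ _ X(2)])
      fix t assume "t \<in> complete_graph n"
      then obtain a b where ab: "t = {a, b}" "a < n" "b < n" "a \<noteq> b"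
        unfolding complete_graph_def by blast
      have "indep (insert {a, b} (star_at n W')) \<longleftrightarrow> indep (insert {x, y} (star_at u W))"
        by (rule indep_star_plus_edge_iff) (use assms W' ab in \<open>auto simp: W'_def\<close>)
      then show "\<not> indep (insert t (star_at n W'))" using assms(5) ab(1) by simp
    qed (use X(1) in blast)
    then show "card X \<le> card W" using card_star_at[OF W'(3)] W'(2) by simp
  qed
qed

definition least_dependent_star :: nat where
  "least_dependent_star = (LEAST k. \<not> indep (star k))"

lemma indep_star_less_least_dependent_star: "k < least_dependent_star \<Longrightarrow> indep (star k)"
  unfolding least_dependent_star_def using not_less_Least by blast

lemma least_dependent_star_le_circuit:
  "circuit M G \<Longrightarrow> min_degree_one G \<Longrightarrow> least_dependent_star \<le> card G"
  unfolding least_dependent_star_def by (rule Least_le) (rule not_indep_star_card_circuit)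

lemma not_indep_least_dependent_star:
  "circuit M G \<Longrightarrow> min_degree_one G \<Longrightarrow> \<not> indep (star least_dependent_star)"
  unfolding least_dependent_star_def by (rule LeastI) (rule not_indep_star_card_circuit)

lemma circuit_least_dependent_star:
  assumes "\<not> indep (star least_dependent_star)"
  shows "circuit M (star least_dependent_star)"
proof (rule circuitI)
  let ?m = least_dependent_star
  show "is_graph (star ?m)" unfolding star_eq_star_at by (rule is_graph_star_at) simp_all
  show "\<not> indep (star ?m)" by (rule assms)
  fix e assume "e \<in> star ?m"
  then obtain i where i: "i \<in> {1..?m}" "e = {0, i}" unfolding star_eq_star_at star_at_def by blast
  then have "star ?m - {e} = star_at 0 ({1..?m} - {i})"
    unfolding star_eq_star_at star_at_def by (auto simp: doubleton_eq_iff)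
  moreover have "card ({1..?m} - {i}) < ?m" using i(1) by simp
  ultimately show "indep (star ?m - {e})"
    using indep_star_at_iff[of "{1..?m} - {i}" 0] indep_star_less_least_dependent_star by simp
qed

lemma indep_eq_empty_if_star_1_dependent:
  assumes "\<not> indep (star 1)" "indep X"
  shows "X = {}"
proof (rule ccontr)
  assume "X \<noteq> {}"
  then obtain d where "d \<in> X" by blast
  then have "indep {d}" using indep_subset[OF assms(2)] by simp
  moreover obtain a b where "a \<noteq> b" "d = {a, b}"
    using assms(2) \<open>d \<in> X\<close> unfolding indep_def is_graph_def by meson
  moreover from this have "{d} = star_at a {b}" unfolding star_at_def by simp
  ultimately show False using indep_star_at_iff[of "{b}" a] assms(1) by simp
qed

lemma two_le_least_dependent_star:
  assumes "small_circuit M G" "min_degree_one G"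
  shows "2 \<le> least_dependent_star"
proof -
  have G: "circuit M G" "card G \<le> family_limit M" using assms(1) unfolding small_circuit_def by simp_all
  have dep: "\<not> indep (star least_dependent_star)"
    using not_indep_least_dependent_star[OF G(1) assms(2)] .
  have "star 0 = {}" unfolding star_def by simp
  then have "least_dependent_star \<noteq> 0" using dep indep_empty by metis
  moreover have "least_dependent_star \<noteq> 1"
  proof
    assume "least_dependent_star = 1"
    then have "family_limit M \<le> 0"
      using dep indep_eq_empty_if_star_1_dependent
      by (intro family_limit_le rank_le[OF is_graph_complete_graph]) fastforce
    moreover have "G \<noteq> {}" "finite G"
      using circuit_not_indep[OF G(1)] indep_empty G(1) unfolding circuit_def is_graph_def by auto
    ultimately show False using G(2) by simp
  qed
  ultimately show ?thesis by linarith
qed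

lemma edges_through_pendant_vertex:
  assumes "small_circuit M G" "card G = least_dependent_star" "pendant_edge G u v"
  shows "\<forall>d\<in>G. u \<in> d"
proof (rule ccontr)
  assume "\<not> (\<forall>d\<in>G. u \<in> d)"
  then obtain f where f: "f \<in> G" "u \<notin> f" by blast
  have circ: "circuit M G" and lim: "card G \<le> family_limit M"
    using assms(1) unfolding small_circuit_def by simp_all
  have G: "is_graph G" using circ unfolding circuit_def by simp
  obtain x y where xy: "x \<noteq> y" "f = {x, y}" using G f(1) unfolding is_graph_def by meson
  have pos: "card G > 0"
    using assms(3) G card_gt_0_iff unfolding is_graph_def pendant_edge_def by blast
  obtain W where W: "finite W" "card W = card G - 1" "W \<inter> verts G = {}"
    using exists_fresh_vertices[OF finite_verts[OF G]] by blast
  have u: "u \<notin> W" and xyW: "{x, y} \<inter> insert u W = {}"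
    using W(3) f xy assms(3) unfolding verts_def pendant_edge_def by auto
  have "\<not> indep (insert {x, y} (star_at u W))"
  proof
    assume "indep (insert {x, y} (star_at u W))"
    moreover have "insert {x, y} (star_at u W) \<subseteq> (G - {{u, v}}) \<union> star_at u W"
      using f xy by auto
    ultimately have "card (insert {x, y} (star_at u W)) < card G"
      using card_indep_less_pendant_circuit[OF circ assms(3) W(3)] by blast
    moreover have "{x, y} \<notin> star_at u W" using f xy unfolding star_at_def by auto
    moreover have "finite (star_at u W)" unfolding star_at_def using W(1) by simp
    ultimately show False using card_star_at[OF u] W(2) pos by simp
  qed
  moreover have "indep (star (card W))"
    using indep_star_less_least_dependent_star W(2) assms(2) pos by simp
  ultimately have "family_limit M \<le> card W"
    by (rule family_limit_le_if_star_plus_edge_dependent[OF W(1) u xy(1) xyW])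
  then show False using lim W(2) pos by simp
qed

lemma isomorphic_star_if_small_pendant_circuit:
  assumes "small_circuit M G" "card G \<le> least_dependent_star" "min_degree_one G"
  shows "isomorphic G (star least_dependent_star)"
proof -
  have circ: "circuit M G" using assms(1) unfolding small_circuit_def by simp
  then have G: "is_graph G" unfolding circuit_def by simp
  have card: "card G = least_dependent_star"
    using least_dependent_star_le_circuit[OF circ assms(3)] assms(2) by simp
  obtain u v where "pendant_edge G u v" using min_degree_one_pendant_edge[OF G assms(3)] .
  then have star: "G = star_at u (verts G - {u})"
    using star_at_eq_if_edges_through[OF G] edges_through_pendant_vertex[OF assms(1) card] by blast
  then have "card (verts G - {u}) = least_dependent_star"
    using card card_star_at by (metis Diff_iff insertI1)
  then show ?thesis using isomorphic_star_at[of "verts G - {u}" u] finite_verts[OF G] star by simp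
qed

end

theorem proposition2p5:
  fixes M :: "graph \<Rightarrow> nat set set \<Rightarrow> bool"
  assumes "graph_matroid_family M"
    and "bounded_family M"
    and "\<exists>G. small_circuit M G \<and> min_degree_one G"
  shows "\<exists>m::nat. m \<ge> 2 \<and> small_circuit M (star m) \<and>
           (\<forall>G. small_circuit M G \<and> card G \<le> m \<and> min_degree_one G \<longrightarrow> isomorphic G (star m))"
proof -
  interpret matroid_family M by (rule matroid_family.intro) (rule assms(1))
  obtain G0 where G0: "small_circuit M G0" "min_degree_one G0" using assms(3) by blast
  then have "circuit M G0" "card G0 \<le> family_limit M" unfolding small_circuit_def by simp_all
  then have "small_circuit M (star least_dependent_star)"
    using circuit_least_dependent_star[OF not_indep_least_dependent_star]
      least_dependent_star_le_circuit G0(2)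
    unfolding small_circuit_def card_star by fastforce
  then show ?thesis
    using two_le_least_dependent_star[OF G0] isomorphic_star_if_small_pendant_circuit by blast
qed

end
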